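(* Let $N\ge1$, $f:\mathbb{N}^N\to\mathbb{N}$, $k\ge0$ and $\boldsymbol{\ell}=(\ell_1,\dots,\ell_N)\in\mathbb{N}^N$. For $i=1,\dots,N$ let $d_i=\gcd(k,\ell_i)$ and $t_i=k/d_i$. Then $\binom{k}{\boldsymbol{\ell}}_f\equiv0\pmod{t_i}$ for all $i=1,\dots,N$; equivalently, $\binom{k}{\boldsymbol{\ell}}_f\equiv 0\pmod M$, where $M=\operatorname{lcm}(t_1,\dots,t_N)$ (i.e. $M=p_1^{m_1}\cdots p_R^{m_R}$ where $t_i=p_1^{(a_i)_1}\cdots p_R^{(a_i)_R}$ and $m_j=\max_i (a_i)_j$).
   Context: $\mathbb{N}=\{0,1,2,\dots\}$. For $k\ge0$ and $\mathbf{x}\in\mathbb{N}^N$, $\binom{k}{\mathbf{x}}_f=\sum_{\mathbf{m}_1+\cdots+\mathbf{m}_k=\mathbf{x}} f(\mathbf{m}_1)\cdots f(\mathbf{m}_k)$ over tuples of vectors in $\mathbb{N}^N$. *)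

theory Defs
  imports "HOL-Analysis.Analysis"
begin

text \<open>Generalized multinomial coefficient: sum over k-tuples (m_0,...,m_{k-1}) of vectors
in N^N (encoded as functions nat => nat^'n that vanish from index k on) summing to x,
of the product f(m_0)*...*f(m_{k-1}).\<close>
definition gen_multinom :: "(nat^'n::finite \<Rightarrow> nat) \<Rightarrow> nat \<Rightarrow> nat^'n \<Rightarrow> nat" where
  "gen_multinom f k x =
     (\<Sum>ms \<in> {ms :: nat \<Rightarrow> nat^'n. (\<forall>j\<ge>k. ms j = 0) \<and> (\<Sum>j<k. ms j) = x}.
        \<Prod>j<k. f (ms j))"

end

theory Submission
  imports Defs "HOL-Number_Theory.Cong"
begin

text \<open>The cyclic group of order k acts on the k-tuples (m_0, ..., m_{k-1}) summing to l by
rotation, and the summand f(m_0)...f(m_{k-1}) is constant on orbits. Hence the sum is a sum of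
terms (orbit size) * (summand), and the orbit of a tuple has size its minimal period p, a
divisor of k. A tuple of period p consists of k/p repetitions of a block, so k/p divides every
l_i and hence gcd(k, l_i); therefore t_i = k/gcd(k, l_i) divides p, and t_i divides every
orbit contribution.\<close>

locale periodic_action =
  fixes S :: "'a set" and rot :: "nat \<Rightarrow> 'a \<Rightarrow> 'a" and k :: nat
  assumes period_pos: "0 < k"
    and rot_rot: "rot a (rot b x) = rot (a + b) x"
    and rot_0: "x \<in> S \<Longrightarrow> rot 0 x = x"
    and rot_period: "x \<in> S \<Longrightarrow> rot k x = x"
    and rot_closed: "x \<in> S \<Longrightarrow> rot j x \<in> S"
begin

definition orbit :: "'a \<Rightarrow> 'a set" where
  "orbit x = range (\<lambda>j. rot j x)"

definition min_period :: "'a \<Rightarrow> nat" where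
  "min_period x = (LEAST p. 0 < p \<and> rot p x = x)"

lemma rot_mult:
  assumes "x \<in> S" "rot p x = x"
  shows "rot (q * p) x = x"
  using assms by (induction q) (auto simp: rot_0 rot_rot[symmetric])

lemma rot_mod:
  assumes "x \<in> S" "rot p x = x"
  shows "rot n x = rot (n mod p) x"
proof -
  have "rot n x = rot (n mod p) (rot (n div p * p) x)"
    by (simp add: rot_rot mod_div_mult_eq)
  then show ?thesis
    using rot_mult[OF assms] by simp
qed

lemma min_period:
  assumes "x \<in> S"
  shows "0 < min_period x" "rot (min_period x) x = x"
proof -
  have "0 < min_period x \<and> rot (min_period x) x = x"
    unfolding min_period_def by (rule LeastI[of _ k]) (simp add: assms period_pos rot_period)
  then show "0 < min_period x" "rot (min_period x) x = x" by auto
qed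

lemma min_period_le:
  "0 < p \<Longrightarrow> rot p x = x \<Longrightarrow> min_period x \<le> p"
  unfolding min_period_def by (rule Least_le) simp

lemma min_period_dvd:
  assumes "x \<in> S" "rot p x = x"
  shows "min_period x dvd p"
proof -
  have "rot (p mod min_period x) x = x"
    using rot_mod[OF assms(1) min_period(2)[OF assms(1)], of p] assms(2) by simp
  then have "p mod min_period x = 0"
    using min_period_le[of "p mod min_period x" x] min_period(1)[OF assms(1)]
    by (meson mod_less_divisor not_gr0 not_less)
  then show ?thesis by auto
qed

lemma orbit_eq_image:
  assumes "x \<in> S"
  shows "orbit x = (\<lambda>j. rot j x) ` {..<min_period x}"
  using rot_mod[OF assms min_period(2)[OF assms]] min_period(1)[OF assms]
  unfolding orbit_def by (auto simp: image_iff intro: mod_less_divisor)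

lemma inj_on_rot:
  assumes "x \<in> S"
  shows "inj_on (\<lambda>j. rot j x) {..<min_period x}"
proof -
  have "a = b" if "a \<le> b" "b < min_period x" "rot a x = rot b x" for a b
  proof (rule ccontr)
    assume "a \<noteq> b"
    have "a \<le> k"
      using that min_period_le[of k x] period_pos assms rot_period by simp
    have "rot (b - a) x = rot (b - a) (rot k x)"
      using assms rot_period by simp
    also have "\<dots> = rot (k - a) (rot b x)"
      using \<open>a \<le> k\<close> that(1) by (simp add: rot_rot add.commute)
    also have "\<dots> = rot (k - a) (rot a x)"
      using that(3) by simp
    also have "\<dots> = x"
      using \<open>a \<le> k\<close> assms rot_period by (simp add: rot_rot)
    finally show False
      using min_period_le[of "b - a" x] that \<open>a \<noteq> b\<close> by simp
  qed
  then show ?thesis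
    by (intro inj_onI) (metis lessThan_iff nat_le_linear)
qed

lemma card_orbit: "x \<in> S \<Longrightarrow> card (orbit x) = min_period x"
  by (simp add: orbit_eq_image card_image inj_on_rot)

lemma orbit_subset: "x \<in> S \<Longrightarrow> orbit x \<subseteq> S"
  by (auto simp: orbit_def rot_closed)

lemma self_in_orbit: "x \<in> S \<Longrightarrow> x \<in> orbit x"
  unfolding orbit_def using rot_0 by (metis rangeI)

lemma orbit_eq:
  assumes "x \<in> S" "y \<in> orbit x"
  shows "orbit y = orbit x"
proof -
  obtain j where y: "y = rot j x"
    using assms(2) by (auto simp: orbit_def)
  have "j \<le> j * k"
    using period_pos by simp
  then have x: "x = rot (j * k - j) y"
    using rot_mult[OF assms(1) rot_period[OF assms(1)], of j] by (simp add: y rot_rot)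
  show ?thesis
  proof
    show "orbit y \<subseteq> orbit x"
      by (auto simp: orbit_def y rot_rot)
    show "orbit x \<subseteq> orbit y"
      by (subst (1) x) (auto simp: orbit_def rot_rot)
  qed
qed

lemma sum_over_orbits:
  assumes "finite S"
  shows "sum g S = (\<Sum>A \<in> orbit ` S. sum g A)"
proof -
  have "\<Union> (orbit ` S) = S"
    using orbit_subset self_in_orbit by blast
  moreover have "A \<inter> B = {}" if "A \<in> orbit ` S" "B \<in> orbit ` S" "A \<noteq> B" for A B
    using that orbit_eq by blast
  moreover have "finite A" if "A \<in> orbit ` S" for A
    using that assms orbit_subset finite_subset by blast
  ultimately show ?thesis
    using sum.Union_disjoint[of "orbit ` S" g] assms by simp
qed

lemma dvd_sum_if_dvd_min_period:
  fixes g :: "'a \<Rightarrow> nat"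
  assumes "finite S"
    and g_rot: "\<And>x j. x \<in> S \<Longrightarrow> g (rot j x) = g x"
    and dvd_period: "\<And>x. x \<in> S \<Longrightarrow> t dvd min_period x"
  shows "t dvd sum g S"
proof -
  have "sum g (orbit x) = min_period x * g x" if "x \<in> S" for x
  proof -
    have "sum g (orbit x) = sum (\<lambda>_. g x) (orbit x)"
      using that g_rot by (intro sum.cong) (auto simp: orbit_def)
    then show ?thesis
      by (simp add: card_orbit[OF that])
  qed
  then have "t dvd sum g A" if "A \<in> orbit ` S" for A
    using that dvd_period by auto
  then show ?thesis
    unfolding sum_over_orbits[OF \<open>finite S\<close>] by (rule dvd_sum)
qed

end

definition vec_compositions :: "nat \<Rightarrow> 'a::comm_monoid_add \<Rightarrow> (nat \<Rightarrow> 'a) set" where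
  "vec_compositions k x = {ms. (\<forall>j\<ge>k. ms j = 0) \<and> (\<Sum>j<k. ms j) = x}"

definition rotate_tuple :: "nat \<Rightarrow> nat \<Rightarrow> (nat \<Rightarrow> 'a::zero) \<Rightarrow> nat \<Rightarrow> 'a" where
  "rotate_tuple k j ms i = (if i < k then ms ((i + j) mod k) else 0)"

lemma gen_multinom_altdef:
  "gen_multinom f k x = (\<Sum>ms \<in> vec_compositions k x. \<Prod>j<k. f (ms j))"
  by (simp add: gen_multinom_def vec_compositions_def)

lemma gen_multinom_0: "gen_multinom f 0 x = (if x = 0 then 1 else 0)"
proof -
  have "vec_compositions 0 x = (if x = 0 then {\<lambda>_. 0} else {})"
    by (auto simp: vec_compositions_def)
  then show ?thesis
    by (simp add: gen_multinom_altdef)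
qed

lemma bij_betw_add_mod:
  assumes "0 < (k::nat)"
  shows "bij_betw (\<lambda>i. (i + j) mod k) {..<k} {..<k}"
proof -
  have "inj_on (\<lambda>i. (i + j) mod k) {..<k}"
  proof (rule inj_onI)
    fix a b assume "a \<in> {..<k}" "b \<in> {..<k}" "(a + j) mod k = (b + j) mod k"
    then show "a = b"
      by (metis cong_def cong_add_rcancel_nat lessThan_iff mod_less)
  qed
  moreover have "(\<lambda>i. (i + j) mod k) ` {..<k} = {..<k}"
    using calculation assms by (intro endo_inj_surj) auto
  ultimately show ?thesis
    by (simp add: bij_betw_def)
qed

lemma sum_rotate:
  fixes h :: "nat \<Rightarrow> 'a::comm_monoid_add"
  assumes "0 < k"
  shows "(\<Sum>i<k. h ((i + j) mod k)) = (\<Sum>i<k. h i)"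
  using sum.reindex_bij_betw[OF bij_betw_add_mod[OF assms]] .

lemma prod_rotate:
  fixes h :: "nat \<Rightarrow> 'a::comm_monoid_mult"
  assumes "0 < k"
  shows "(\<Prod>i<k. h ((i + j) mod k)) = (\<Prod>i<k. h i)"
  using prod.reindex_bij_betw[OF bij_betw_add_mod[OF assms]] .

lemma rotate_tuple_rotate_tuple:
  "0 < k \<Longrightarrow> rotate_tuple k a (rotate_tuple k b ms) = rotate_tuple k (a + b) ms"
  by (auto simp: fun_eq_iff rotate_tuple_def mod_add_left_eq add.assoc)

lemma rotate_tuple_0:
  "ms \<in> vec_compositions k x \<Longrightarrow> rotate_tuple k 0 ms = ms"
  by (auto simp: fun_eq_iff rotate_tuple_def vec_compositions_def)

lemma rotate_tuple_k:
  "ms \<in> vec_compositions k x \<Longrightarrow> rotate_tuple k k ms = ms"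
  by (auto simp: fun_eq_iff rotate_tuple_def vec_compositions_def)

lemma rotate_tuple_in_vec_compositions:
  assumes "0 < k" "ms \<in> vec_compositions k x"
  shows "rotate_tuple k j ms \<in> vec_compositions k x"
  using assms sum_rotate[OF assms(1), of ms j]
  by (simp add: vec_compositions_def rotate_tuple_def)

lemma periodic_action_rotate_tuple:
  "0 < k \<Longrightarrow> periodic_action (vec_compositions k x) (rotate_tuple k) k"
  by unfold_locales
    (simp_all add: rotate_tuple_rotate_tuple rotate_tuple_0 rotate_tuple_k rotate_tuple_in_vec_compositions)

lemma rotate_tuple_fixed_periodic:
  assumes fixed: "rotate_tuple k p ms = ms" and "0 < p" "i < k"
  shows "ms i = ms (i mod p)"
  using \<open>i < k\<close>
proof (induction i rule: less_induct)
  case (less i)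
  show ?case
  proof (cases "i < p")
    case False
    then have "i - p < i"
      using \<open>0 < p\<close> less.prems by auto
    moreover have "ms i = ms (i - p)"
    proof -
      have "i - p + p = i" "i - p < k"
        using False less.prems by auto
      then show ?thesis
        using fun_cong[OF fixed, of "i - p"] less.prems by (simp add: rotate_tuple_def)
    qed
    ultimately show ?thesis
      using less False by (simp add: le_mod_geq)
  qed simp
qed

lemma sum_mod_period:
  fixes h :: "nat \<Rightarrow> 'a::comm_semiring_1"
  shows "(\<Sum>j<q * p. h (j mod p)) = of_nat q * (\<Sum>j<p. h j)"
proof -
  have "(\<Sum>j\<in>{m * p..<m * p + p}. h (j mod p)) = (\<Sum>j<p. h j)" for m
    using sum.shift_bounds_nat_ivl[of "\<lambda>j. h (j mod p)" 0 "m * p" p]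
    by (simp add: add.commute atLeast0LessThan)
  then have "(\<Sum>j<q * p. h (j mod p)) = (\<Sum>m<q. \<Sum>j<p. h j)"
    using sum.nat_group[of "\<lambda>j. h (j mod p)" p q] by simp
  then show ?thesis
    by simp
qed

lemma div_gcd_dvd:
  fixes k :: nat
  assumes "k \<noteq> 0" "k = q * p" "q dvd m"
  shows "k div gcd k m dvd p"
proof -
  obtain c where c: "gcd k m = q * c"
    using assms by (meson dvd_triv_left gcd_greatest dvdE)
  have "k = gcd k m * (k div gcd k m)"
    by simp
  then have "p = c * (k div gcd k m)"
    using assms c by (metis mult.assoc mult_cancel_left mult_is_0)
  then show ?thesis
    by simp
qed

lemma div_gcd_dvd_rotation_period:
  fixes x :: "nat^'n"
  assumes "ms \<in> vec_compositions k x" "rotate_tuple k p ms = ms" "0 < k" "p dvd k"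
  shows "k div gcd k (x $ i) dvd p"
proof -
  define q where "q = k div p"
  have k: "k = q * p"
    using assms(4) by (simp add: q_def)
  have "0 < p"
    using assms(3,4) by (intro gr0I) auto
  have "x $ i = (\<Sum>j<k. ms j $ i)"
    using assms(1) unfolding vec_compositions_def by (auto simp: sum_component)
  also have "\<dots> = (\<Sum>j<q * p. ms (j mod p) $ i)"
    using rotate_tuple_fixed_periodic[OF assms(2) \<open>0 < p\<close>] k by (intro sum.cong) auto
  also have "\<dots> = q * (\<Sum>j<p. ms j $ i)"
    using sum_mod_period[where h = "\<lambda>j. ms j $ i" and q = q and p = p] by simp
  finally have "q dvd x $ i"
    by simp
  then show ?thesis
    using div_gcd_dvd k assms(3) by blast
qed

lemma gen_multinom_dvd:
  fixes f :: "nat^'n \<Rightarrow> nat" and x :: "nat^'n"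
  assumes "0 < k"
  shows "k div gcd k (x $ i) dvd gen_multinom f k x"
proof (cases "finite (vec_compositions k x)")
  case True
  interpret periodic_action "vec_compositions k x" "rotate_tuple k" k
    using periodic_action_rotate_tuple[OF assms] .
  have "k div gcd k (x $ i) dvd min_period ms" if "ms \<in> vec_compositions k x" for ms
    using div_gcd_dvd_rotation_period min_period[OF that] min_period_dvd[OF that rot_period[OF that]]
      that assms by blast
  moreover have "(\<Prod>j<k. f (rotate_tuple k r ms j)) = (\<Prod>j<k. f (ms j))" for r ms
    using prod_rotate[OF assms, of "\<lambda>j. f (ms j)"] by (simp add: rotate_tuple_def)
  ultimately show ?thesis
    unfolding gen_multinom_altdef
    by (intro dvd_sum_if_dvd_min_period[OF True, of "\<lambda>ms. \<Prod>j<k. f (ms j)"]) auto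
qed (simp add: gen_multinom_altdef) \<comment> \<open>an infinite sum is 0 by convention\<close>

theorem theorem11:
  fixes f :: "nat^'n::finite \<Rightarrow> nat" and k :: nat and l :: "nat^'n"
  shows "(\<forall>i. gcd k (l$i) \<noteq> 0 \<longrightarrow> (k div gcd k (l$i)) dvd gen_multinom f k l)
       \<and> Lcm ((\<lambda>i. k div gcd k (l$i)) ` {i. gcd k (l$i) \<noteq> 0}) dvd gen_multinom f k l"
proof (cases "k = 0")
  case True
  then show ?thesis
    by (cases "l = 0") (auto simp: gen_multinom_0 vec_eq_iff)
next
  case False
  then have "\<forall>i. k div gcd k (l$i) dvd gen_multinom f k l"
    using gen_multinom_dvd by blast
  then show ?thesis
    by (auto intro: Lcm_least)
qed

end
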